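(* Let $p$ be an odd prime and $G$ the non-abelian group of order $p^3$ and exponent $p$. Let $S$ be a sequence over $G$ of length $3p-2$ none of whose terms lies in $Z(G)$, and suppose that for some non-central $z$-class $\mathcal{K}$ of $G$ exactly $p$ terms of $S$ (counted with multiplicity) lie in $\mathcal{K}$, and that these $p$ terms are pairwise conjugate in $G$. Then $S$ has a non-empty product-one subsequence.
   Context: $G = \langle x, y : x^p = y^p = 1,\ [y,x] \text{ central}\rangle$ is the Heisenberg group of order $p^3$ and exponent $p$, with $Z(G)=[G,G]$ of order $p$. For $g\in G\setminus Z(G)$, its $z$-class is $\mathcal{K}[g] = \{g^\lambda u : 1\le\lambda\le p-1,\ u\in Z(G)\} = C_G(g)\setminus Z(G)$. A sequence over $G$ is a finite unordered list (multiset) of elements of $G$; a subsequence is a sub-multiset; a non-empty sequence is product-one if some ordering of its terms has product $1$. *)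

theory Defs
  imports "HOL-Algebra.Group" "HOL-Library.Multiset" "HOL-Computational_Algebra.Primes"
begin

definition grp_center :: "('a, 'b) monoid_scheme \<Rightarrow> 'a set" where
  "grp_center G = {z \<in> carrier G. \<forall>g \<in> carrier G. z \<otimes>\<^bsub>G\<^esub> g = g \<otimes>\<^bsub>G\<^esub> z}"

definition zclass :: "('a, 'b) monoid_scheme \<Rightarrow> nat \<Rightarrow> 'a \<Rightarrow> 'a set" where
  "zclass G p g = {(g [^]\<^bsub>G\<^esub> k) \<otimes>\<^bsub>G\<^esub> u | k u. 1 \<le> k \<and> k \<le> p - 1 \<and> u \<in> grp_center G}"

definition conjugate :: "('a, 'b) monoid_scheme \<Rightarrow> 'a \<Rightarrow> 'a \<Rightarrow> bool" where
  "conjugate G x y \<longleftrightarrow> (\<exists>h \<in> carrier G. y = h \<otimes>\<^bsub>G\<^esub> x \<otimes>\<^bsub>G\<^esub> inv\<^bsub>G\<^esub> h)"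

definition list_prod :: "('a, 'b) monoid_scheme \<Rightarrow> 'a list \<Rightarrow> 'a" where
  "list_prod G xs = foldr (\<lambda>x acc. x \<otimes>\<^bsub>G\<^esub> acc) xs \<one>\<^bsub>G\<^esub>"

definition product_one :: "('a, 'b) monoid_scheme \<Rightarrow> 'a multiset \<Rightarrow> bool" where
  "product_one G T \<longleftrightarrow> T \<noteq> {#} \<and> (\<exists>xs. mset xs = T \<and> list_prod G xs = \<one>\<^bsub>G\<^esub>)"

end

theory Submission
  imports Defs "HOL-Algebra.Group_Action" "HOL-Library.Function_Algebras"
begin

text \<open>
  Let g be one of the p terms of S in K. Commutators in G are central, so these p terms, being
  conjugate to g, are of the form c g with c central, while each of the 2p - 2 remaining terms
  fails to commute with g (a term commuting with g lies in K or in Z(G)). The quotient G/Z(G) is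
  elementary abelian of order p^2, and the Davenport constant of C_p \<times> C_p is 2p - 1; applied to
  g\<inverse> followed by the remaining terms, this yields a non-empty subsequence J of the remaining terms
  whose product, together with that of p or p - 1 of the terms c g, is central. The first term y
  of J has a nontrivial commutator t with g, which generates Z(G). Moving y across m of the terms
  c g multiplies the product by t^m, and a suitable m turns the central product into 1.
\<close>

section \<open>Zero-sum subsequences in (\<int>/p)^2\<close>

type_synonym grid_fun = "int \<Rightarrow> int \<Rightarrow> int"

definition bdiff :: "int \<times> int \<Rightarrow> grid_fun \<Rightarrow> grid_fun" where
  "bdiff v f = (\<lambda>x y. f x y - f (x - fst v) (y - snd v))"

abbreviation Dx :: "grid_fun \<Rightarrow> grid_fun" where "Dx \<equiv> bdiff (1, 0)"
abbreviation Dy :: "grid_fun \<Rightarrow> grid_fun" where "Dy \<equiv> bdiff (0, 1)"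

definition doubly_periodic :: "nat \<Rightarrow> grid_fun \<Rightarrow> bool" where
  "doubly_periodic p f \<longleftrightarrow> (\<forall>x y a b. f (x + int p * a) (y + int p * b) = f x y)"

definition values_dvd :: "nat \<Rightarrow> grid_fun \<Rightarrow> bool" where
  "values_dvd p f \<longleftrightarrow> (\<forall>x y. int p dvd f x y)"

lemma bdiff_commute: "bdiff u (bdiff v f) = bdiff v (bdiff u f)"
  by (simp add: bdiff_def fun_eq_iff algebra_simps)

lemma bdiff_pow_commute: "(bdiff u ^^ n) (bdiff v f) = bdiff v ((bdiff u ^^ n) f)"
  by (induction n) (simp_all add: bdiff_commute)

lemma bdiff_add: "bdiff v (f + g) = bdiff v f + bdiff v g"
  by (simp add: bdiff_def fun_eq_iff algebra_simps)

lemma bdiff_pow_add: "(bdiff v ^^ n) (f + g) = (bdiff v ^^ n) f + (bdiff v ^^ n) g"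
  by (induction n) (simp_all add: bdiff_add del: plus_fun_apply)

lemma fold_bdiff_add: "fold bdiff vs (f + g) = fold bdiff vs f + fold bdiff vs g"
  by (induction vs arbitrary: f g) (simp_all add: bdiff_add del: plus_fun_apply)

lemma doubly_periodic_shiftD:
  "doubly_periodic p f \<Longrightarrow> f (x + int p * a - u) (y + int p * b - w) = f (x - u) (y - w)"
  unfolding doubly_periodic_def by (metis diff_add_eq)

lemma doubly_periodic_bdiff: "doubly_periodic p f \<Longrightarrow> doubly_periodic p (bdiff v f)"
  unfolding doubly_periodic_def bdiff_def
  by (simp add: doubly_periodic_shiftD[unfolded doubly_periodic_def])

lemma doubly_periodic_bdiff_pow:
  "doubly_periodic p f \<Longrightarrow> doubly_periodic p ((bdiff v ^^ n) f)"
  by (induction n) (simp_all add: doubly_periodic_bdiff)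

lemma values_dvd_add: "values_dvd p f \<Longrightarrow> values_dvd p g \<Longrightarrow> values_dvd p (f + g)"
  by (simp add: values_dvd_def)

lemma values_dvd_bdiff: "values_dvd p f \<Longrightarrow> values_dvd p (bdiff v f)"
  by (simp add: values_dvd_def bdiff_def)

lemma values_dvd_bdiff_pow: "values_dvd p f \<Longrightarrow> values_dvd p ((bdiff v ^^ n) f)"
  by (induction n) (simp_all add: values_dvd_bdiff)

lemma bdiff_pow_eq:
  "(bdiff v ^^ n) f x y =
     (\<Sum>t\<le>n. (-1) ^ t * int (n choose t) * f (x - int t * fst v) (y - int t * snd v))"
proof (induction n arbitrary: x y)
  case 0
  then show ?case by simp
next
  case (Suc n)
  define g where "g t = f (x - int t * fst v) (y - int t * snd v)" for t
  have shift: "f (x - fst v - int t * fst v) (y - snd v - int t * snd v) = g (Suc t)" for t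
    by (simp add: g_def algebra_simps)
  define c where "c k t = (-1) ^ t * int (k choose t) * g t" for k t
  have pascal: "c (Suc n) (Suc t) = c n (Suc t) - (-1) ^ t * int (n choose t) * g (Suc t)" for t
    by (simp add: c_def algebra_simps)
  have "(\<Sum>t\<le>Suc n. c (Suc n) t) = g 0 + (\<Sum>t\<le>n. c (Suc n) (Suc t))"
    by (subst sum.atMost_Suc_shift) (simp add: c_def)
  also have "\<dots> = (\<Sum>t\<le>Suc n. c n t) - (\<Sum>t\<le>n. (-1) ^ t * int (n choose t) * g (Suc t))"
    by (simp only: sum.atMost_Suc_shift[of "c n"] pascal sum_subtractf) (simp add: c_def)
  also have "\<dots> = (bdiff v ^^ Suc n) f x y"
    by (simp add: bdiff_def Suc c_def g_def shift sum_subtractf)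
  finally show ?case by (simp add: c_def g_def)
qed

lemma prime_dvd_one_plus_neg_one_pow:
  assumes "prime p" shows "int p dvd 1 + (-1) ^ p"
proof (cases "even p")
  case True
  then have "p = 2" using primes_dvd_imp_eq[OF two_is_prime_nat assms] by simp
  then show ?thesis by simp
qed simp

lemma values_dvd_bdiff_pow_prime:
  assumes p: "prime p" and f: "doubly_periodic p f"
  shows "values_dvd p ((bdiff v ^^ p) f)"
  unfolding values_dvd_def
proof (intro allI)
  fix x y
  define c where
    "c t = (-1) ^ t * int (p choose t) * f (x - int t * fst v) (y - int t * snd v)" for t
  have p0: "p > 0" using p prime_gt_0_nat by blast
  have split: "{..p} = insert 0 (insert p {1..<p})" using p0 by auto
  have ends: "c 0 + c p = (1 + (-1) ^ p) * f x y"
    using f[unfolded doubly_periodic_def, rule_format, of x "- fst v" y "- snd v"]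
    by (simp add: c_def algebra_simps)
  have middle: "int p dvd (\<Sum>t\<in>{1..<p}. c t)"
  proof (rule dvd_sum)
    fix t assume "t \<in> {1..<p}"
    then have "p dvd (p choose t)" using dvd_choose_prime p by auto
    then show "int p dvd c t" by (simp add: c_def int_dvd_int_iff)
  qed
  have "int p dvd c 0 + c p"
    unfolding ends using prime_dvd_one_plus_neg_one_pow[OF p] by (rule dvd_mult2)
  moreover have "(bdiff v ^^ p) f x y = (c 0 + c p) + (\<Sum>t\<in>{1..<p}. c t)"
    unfolding bdiff_pow_eq split using p0 by (simp add: c_def)
  ultimately show "int p dvd (bdiff v ^^ p) f x y"
    using middle by (simp only: dvd_add)
qed

lemma doubly_periodic_mod:
  assumes "doubly_periodic p f"
  shows "f (x - a) (y - b) = f (x - a mod int p) (y - b mod int p)"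
  using assms[unfolded doubly_periodic_def, rule_format, of "x - a mod int p" "- (a div int p)"
      "y - b mod int p" "- (b div int p)"]
  by (simp add: algebra_simps minus_mod_eq_mult_div[symmetric])

definition row_sum :: "nat \<Rightarrow> grid_fun \<Rightarrow> grid_fun" where
  "row_sum a h = (\<lambda>x y. \<Sum>t<a. h (x - int t) y)"

definition column_sum :: "nat \<Rightarrow> nat \<Rightarrow> grid_fun \<Rightarrow> grid_fun" where
  "column_sum a b h = (\<lambda>x y. \<Sum>t<b. h (x - int a) (y - int t))"

lemma Dx_row_sum: "Dx (row_sum a h) x y = h x y - h (x - int a) y"
  by (induction a) (simp_all add: bdiff_def row_sum_def algebra_simps)

lemma Dy_column_sum: "Dy (column_sum a b h) x y = h (x - int a) y - h (x - int a) (y - int b)"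
  by (induction b) (simp_all add: bdiff_def column_sum_def algebra_simps)

lemma doubly_periodic_row_sum: "doubly_periodic p h \<Longrightarrow> doubly_periodic p (row_sum a h)"
  using doubly_periodic_shiftD[of p h _ _ _ _ _ 0] by (simp add: doubly_periodic_def row_sum_def)

lemma doubly_periodic_column_sum:
  "doubly_periodic p h \<Longrightarrow> doubly_periodic p (column_sum a b h)"
  unfolding doubly_periodic_def column_sum_def
  by (simp add: doubly_periodic_shiftD[unfolded doubly_periodic_def])

lemma bdiff_eq_Dx_plus_Dy:
  assumes h: "doubly_periodic p h" and p: "p > 0"
  obtains h1 h2 where "doubly_periodic p h1" "doubly_periodic p h2" "bdiff v h = Dx h1 + Dy h2"
proof -
  define a where "a = nat (fst v mod int p)"
  define b where "b = nat (snd v mod int p)"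
  have "bdiff v h = bdiff (int a, int b) h"
    using doubly_periodic_mod[OF h] p by (simp add: bdiff_def fun_eq_iff a_def b_def)
  also have "\<dots> = Dx (row_sum a h) + Dy (column_sum a b h)"
    by (simp add: fun_eq_iff Dx_row_sum Dy_column_sum bdiff_def[of "(int a, int b)"])
  finally show ?thesis
    by (rule that[OF doubly_periodic_row_sum[OF h] doubly_periodic_column_sum[OF h]])
qed

text \<open>
  A difference of a doubly periodic function is an x-difference plus a y-difference of doubly
  periodic functions, and among 2p - 1 differences taken in the two directions, one direction
  occurs p times.
\<close>

lemma values_dvd_iterated_bdiff:
  assumes p: "prime p" and h: "doubly_periodic p h" and len: "2 * p - 1 \<le> length vs + i + j"
  shows "values_dvd p (fold bdiff vs ((Dx ^^ i) ((Dy ^^ j) h)))"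
  using h len
proof (induction vs arbitrary: h i j)
  case Nil
  then have "2 * p - 1 \<le> i + j" by simp
  then consider "p \<le> i" | "p \<le> j" by linarith
  then show ?case
  proof cases
    case 1
    then have "(Dx ^^ i) ((Dy ^^ j) h) = (Dx ^^ (i - p)) ((Dx ^^ p) ((Dy ^^ j) h))"
      by (metis funpow_add comp_apply le_add_diff_inverse2)
    then show ?thesis
      using values_dvd_bdiff_pow_prime[OF p doubly_periodic_bdiff_pow[OF Nil.prems(1)]]
      by (simp add: values_dvd_bdiff_pow)
  next
    case 2
    then have "(Dx ^^ i) ((Dy ^^ j) h) = (Dx ^^ i) ((Dy ^^ (j - p)) ((Dy ^^ p) h))"
      by (metis funpow_add comp_apply le_add_diff_inverse2)
    then show ?thesis
      using values_dvd_bdiff_pow_prime[OF p Nil.prems(1)]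
      by (simp add: values_dvd_bdiff_pow)
  qed
next
  case (Cons v vs)
  obtain h1 h2
    where h12: "doubly_periodic p h1" "doubly_periodic p h2" "bdiff v h = Dx h1 + Dy h2"
    using bdiff_eq_Dx_plus_Dy[OF Cons.prems(1)] p prime_gt_0_nat by blast
  have "bdiff v ((Dx ^^ i) ((Dy ^^ j) h)) = (Dx ^^ i) ((Dy ^^ j) (Dx h1 + Dy h2))"
    by (simp only: bdiff_pow_commute[symmetric] h12(3))
  also have "\<dots> = (Dx ^^ Suc i) ((Dy ^^ j) h1) + (Dx ^^ i) ((Dy ^^ Suc j) h2)"
    by (simp only: bdiff_pow_add bdiff_pow_commute funpow.simps comp_apply)
  finally show ?case
    using Cons.IH[of h1 "Suc i" j] Cons.IH[of h2 i "Suc j"] Cons.prems h12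
    by (simp add: fold_bdiff_add values_dvd_add del: plus_fun_apply)
qed

lemma fold_bdiff_map_eq:
  "fold bdiff (map v xs) f x y =
     (\<Sum>l\<leftarrow>subseqs xs. (-1) ^ length l *
        f (x - (\<Sum>a\<leftarrow>l. fst (v a))) (y - (\<Sum>a\<leftarrow>l. snd (v a))))"
proof (induction xs arbitrary: f x y)
  case (Cons a xs)
  show ?case
    by (simp only: list.map fold_Cons comp_apply Cons.IH)
      (simp add: Let_def bdiff_def sum_list_subtractf sum_list_addf[symmetric] algebra_simps o_def)
qed simp

lemma sum_list_subseqs_eq_Nil:
  assumes "\<And>l. l \<in> set (subseqs xs) \<Longrightarrow> l \<noteq> [] \<Longrightarrow> F l = 0"
  shows "(\<Sum>l\<leftarrow>subseqs xs. F l) = F []"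
  using assms
proof (induction xs)
  case (Cons a xs)
  have "(\<Sum>l\<leftarrow>subseqs xs. F (a # l)) = (\<Sum>l\<leftarrow>subseqs xs. 0)"
    using Cons.prems by (intro arg_cong[where f = sum_list] map_cong) (auto simp: Let_def)
  moreover have "(\<Sum>l\<leftarrow>subseqs xs. F l) = F []"
    using Cons.prems by (intro Cons.IH) (auto simp: Let_def)
  ultimately show ?case by (simp add: Let_def o_def)
qed simp

text \<open>
  At the origin, the iterated difference of the indicator \<delta> of (p\<int>)^2 is the number of
  subsequences with sum in (p\<int>)^2, counted with sign (-1)^length; without a non-empty one it
  is 1.
\<close>

theorem zero_sum_subseq:
  fixes v :: "'x \<Rightarrow> int \<times> int"
  assumes p: "prime p" and len: "2 * p - 1 \<le> length xs"
  shows "\<exists>l\<in>set (subseqs xs). l \<noteq> [] \<and>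
    int p dvd (\<Sum>a\<leftarrow>l. fst (v a)) \<and> int p dvd (\<Sum>a\<leftarrow>l. snd (v a))"
proof (rule ccontr)
  assume none: "\<not> ?thesis"
  define \<delta> :: grid_fun where "\<delta> x y = (if int p dvd x \<and> int p dvd y then 1 else 0)" for x y
  have "doubly_periodic p \<delta>"
    by (simp add: doubly_periodic_def \<delta>_def dvd_add_left_iff)
  then have "int p dvd fold bdiff (map v xs) \<delta> 0 0"
    using values_dvd_iterated_bdiff[OF p, of \<delta> "map v xs" 0 0] len
    by (simp add: values_dvd_def)
  also have "fold bdiff (map v xs) \<delta> 0 0 = 1"
    unfolding fold_bdiff_map_eq using none
    by (subst sum_list_subseqs_eq_Nil) (auto simp: \<delta>_def)
  finally show False
    using p by (simp add: prime_gt_1_nat)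
qed

section \<open>Maps of prime period\<close>

lemma funpow_fixed_if_coprime_periods:
  assumes p: "prime p" and ap: "(f ^^ p) a = a" and ad: "(f ^^ d) a = a" and nd: "\<not> p dvd d"
  shows "f a = a"
proof -
  have "d \<noteq> 0" using nd by (metis dvd_0_right)
  moreover have "gcd d p = 1"
    using prime_imp_coprime[OF p nd] by (simp add: coprime_commute)
  ultimately obtain e q where e: "d * e = p * q + 1" using bezout_nat[of d p] by auto
  have "(f ^^ (d * e)) a = a"
    using funpow_mod_eq[OF ad, of "d * e"] by simp
  moreover have "(d * e) mod p = 1"
    unfolding e using prime_gt_1_nat[OF p] mod_mult_self4[of p q 1] by simp
  ultimately show ?thesis
    using funpow_mod_eq[OF ap, of "d * e"] by simp
qed

lemma inj_on_funpow_orbit_prime: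
  assumes p: "prime p" and ap: "(f ^^ p) a = a" and fa: "f a \<noteq> a"
  shows "inj_on (\<lambda>k. (f ^^ k) a) {..<p}"
proof -
  have "i = j" if ij: "i \<le> j" "j < p" and eq: "(f ^^ i) a = (f ^^ j) a" for i j
  proof (rule ccontr)
    assume "i \<noteq> j"
    define b where "b = (f ^^ i) a"
    have "(f ^^ p) b = b"
      using ap by (metis b_def funpow_add add.commute comp_apply)
    moreover have "(f ^^ (j - i)) b = (f ^^ (j - i + i)) a"
      by (simp add: b_def funpow_add)
    then have "(f ^^ (j - i)) b = b"
      using eq ij by (simp add: b_def)
    moreover have "\<not> p dvd j - i"
      using ij \<open>i \<noteq> j\<close> by (intro nat_dvd_not_less) auto
    ultimately have fb: "f b = b"
      by (rule funpow_fixed_if_coprime_periods[OF p])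
    have "(f ^^ (p - i)) b = (f ^^ (p - i + i)) a"
      by (simp add: b_def funpow_add)
    then have returns: "(f ^^ (p - i)) b = a"
      using ap ij by simp
    then have "f a = (f ^^ (p - i)) (f b)"
      by (metis funpow_swap1)
    then show False using fb fa returns by simp
  qed
  then show ?thesis
    by (intro inj_onI) (metis lessThan_iff linorder_le_cases)
qed

lemma funpow_orbit_no_fixed_point:
  assumes ap: "(f ^^ p) a = a" and fa: "f a \<noteq> a" and k: "k \<le> p"
  shows "f ((f ^^ k) a) \<noteq> (f ^^ k) a"
proof
  assume fixed: "f ((f ^^ k) a) = (f ^^ k) a"
  have "a = (f ^^ (p - k)) ((f ^^ k) a)"
    using ap k by (simp flip: funpow_add[unfolded comp_def, THEN fun_cong])
  also have "\<dots> = (f ^^ k) a"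
    using funpow_mod_eq[where n = 1 and x = "(f ^^ k) a" and m = "p - k"] fixed by simp
  finally show False using fa fixed by simp
qed

lemma funpow_orbit_preimage:
  assumes p: "p > 0" and ap: "(f ^^ p) a = a" and bp: "(f ^^ p) b = b"
    and fb: "f b \<in> (\<lambda>k. (f ^^ k) a) ` {..<p}"
  shows "b \<in> (\<lambda>k. (f ^^ k) a) ` {..<p}"
proof -
  obtain k where k: "f b = (f ^^ k) a" using fb by auto
  have "b = (f ^^ Suc (p - 1)) b" using bp p by simp
  also have "\<dots> = (f ^^ (p - 1 + k)) a" by (simp add: funpow_add funpow_swap1 k)
  also have "\<dots> = (f ^^ ((p - 1 + k) mod p)) a" by (simp add: funpow_mod_eq[OF ap])
  finally show ?thesis using p by simp
qed

lemma card_fixed_points_mod_prime: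
  assumes "finite A" and p: "prime p" and "f ` A \<subseteq> A" and "\<forall>a\<in>A. (f ^^ p) a = a"
  shows "card {a\<in>A. f a = a} mod p = card A mod p"
  using assms(1,3,4)
proof (induction "card A" arbitrary: A rule: less_induct)
  case less
  show ?case
  proof (cases "\<forall>a\<in>A. f a = a")
    case True
    then have "{a\<in>A. f a = a} = A" by blast
    then show ?thesis by simp
  next
    case False
    then obtain a where a: "a \<in> A" "f a \<noteq> a" by blast
    have ap: "(f ^^ p) a = a" using less.prems(3) a(1) by blast
    define orb where "orb = (\<lambda>k. (f ^^ k) a) ` {..<p}"
    have "(f ^^ k) a \<in> A" for k
      by (induction k) (use a(1) less.prems(2) in auto)
    then have orb_A: "orb \<subseteq> A" by (auto simp: orb_def)
    have card_orb: "card orb = p"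
      unfolding orb_def using inj_on_funpow_orbit_prime[OF p ap a(2)] by (simp add: card_image)
    have rest_closed: "f b \<in> A - orb" if "b \<in> A - orb" for b
      using that less.prems funpow_orbit_preimage[OF prime_gt_0_nat[OF p] ap, of b]
      by (auto simp: orb_def)
    have card_A: "card A = card (A - orb) + p"
      using card_Diff_subset[OF finite_subset[OF orb_A less.prems(1)] orb_A]
        card_mono[OF less.prems(1) orb_A] card_orb by simp
    have "card {b\<in>A - orb. f b = b} mod p = card (A - orb) mod p"
      using less.prems rest_closed card_A prime_gt_0_nat[OF p]
      by (intro less.hyps) auto
    moreover have "{b\<in>A. f b = b} = {b\<in>A - orb. f b = b}"
      using funpow_orbit_no_fixed_point[OF ap a(2)] by (auto simp: orb_def)
    ultimately show ?thesis using card_A by simp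
  qed
qed

section \<open>Centre, centralizers and commutators\<close>

definition centralizer :: "('a, 'b) monoid_scheme \<Rightarrow> 'a \<Rightarrow> 'a set" where
  "centralizer G x = {g \<in> carrier G. g \<otimes>\<^bsub>G\<^esub> x = x \<otimes>\<^bsub>G\<^esub> g}"

definition commutator :: "('a, 'b) monoid_scheme \<Rightarrow> 'a \<Rightarrow> 'a \<Rightarrow> 'a" where
  "commutator G a b = a \<otimes>\<^bsub>G\<^esub> b \<otimes>\<^bsub>G\<^esub> inv\<^bsub>G\<^esub> a \<otimes>\<^bsub>G\<^esub> inv\<^bsub>G\<^esub> b"

definition conjugation :: "('a, 'b) monoid_scheme \<Rightarrow> 'a \<Rightarrow> 'a \<Rightarrow> 'a" where
  "conjugation G g = (\<lambda>h\<in>carrier G. g \<otimes>\<^bsub>G\<^esub> h \<otimes>\<^bsub>G\<^esub> inv\<^bsub>G\<^esub> g)"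

context group
begin

lemma inv_mult_cancel_left [simp]:
  "x \<in> carrier G \<Longrightarrow> y \<in> carrier G \<Longrightarrow> inv x \<otimes> (x \<otimes> y) = y"
  by (simp flip: m_assoc)

lemma mult_inv_cancel_left [simp]:
  "x \<in> carrier G \<Longrightarrow> y \<in> carrier G \<Longrightarrow> x \<otimes> (inv x \<otimes> y) = y"
  by (simp flip: m_assoc)

lemma subgroup_nat_pow_closed: "subgroup H G \<Longrightarrow> x \<in> H \<Longrightarrow> x [^] (n :: nat) \<in> H"
  by (induction n) (simp_all add: subgroup.one_closed subgroup.m_closed)

lemma centerI:
  "z \<in> carrier G \<Longrightarrow> (\<And>g. g \<in> carrier G \<Longrightarrow> z \<otimes> g = g \<otimes> z) \<Longrightarrow> z \<in> grp_center G"
  by (auto simp: grp_center_def)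

lemma center_closed: "z \<in> grp_center G \<Longrightarrow> z \<in> carrier G"
  by (simp add: grp_center_def)

lemma center_commute: "z \<in> grp_center G \<Longrightarrow> g \<in> carrier G \<Longrightarrow> z \<otimes> g = g \<otimes> z"
  by (simp add: grp_center_def)

lemma center_left_commute:
  "z \<in> grp_center G \<Longrightarrow> a \<in> carrier G \<Longrightarrow> b \<in> carrier G \<Longrightarrow> a \<otimes> (z \<otimes> b) = z \<otimes> (a \<otimes> b)"
  by (simp add: center_closed center_commute[of z a] flip: m_assoc)

lemma conjugation_eq_iff:
  "g \<in> carrier G \<Longrightarrow> x \<in> carrier G \<Longrightarrow> g \<otimes> x \<otimes> inv g = x \<longleftrightarrow> g \<otimes> x = x \<otimes> g"
  using inv_solve_right'[of x "g \<otimes> x" g] by simp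

lemma group_action_conjugation: "group_action G (carrier G) (conjugation G)"
  unfolding conjugation_def by (rule action_by_conjugation)

lemma orbit_conjugation:
  "x \<in> carrier G \<Longrightarrow> orbit G (conjugation G) x = {g \<otimes> x \<otimes> inv g | g. g \<in> carrier G}"
  by (auto simp: orbit_def conjugation_def)

lemma stabilizer_conjugation:
  assumes x: "x \<in> carrier G"
  shows "stabilizer G (conjugation G) x = centralizer G x"
  unfolding stabilizer_def conjugation_def centralizer_def
proof (rule Collect_cong)
  fix g
  show "(g \<in> carrier G \<and> (\<lambda>h\<in>carrier G. g \<otimes> h \<otimes> inv g) x = x) \<longleftrightarrow>
    (g \<in> carrier G \<and> g \<otimes> x = x \<otimes> g)"
    using conjugation_eq_iff[of g x] x by auto
qed

lemma centralizer_subgroup: "x \<in> carrier G \<Longrightarrow> subgroup (centralizer G x) G"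
  using group_action.stabilizer_subgroup[OF group_action_conjugation, of x]
    stabilizer_conjugation[of x]
  by simp

lemma center_eq_Inter_centralizer: "grp_center G = (\<Inter>x\<in>carrier G. centralizer G x)"
  unfolding grp_center_def centralizer_def by blast

lemma center_subgroup: "subgroup (grp_center G) G"
  unfolding center_eq_Inter_centralizer
  by (rule subgroups_Inter) (auto simp: centralizer_subgroup)

lemma center_subset_centralizer: "x \<in> carrier G \<Longrightarrow> grp_center G \<subseteq> centralizer G x"
  by (auto simp: centralizer_def grp_center_def)

lemma mem_centralizer_self: "x \<in> carrier G \<Longrightarrow> x \<in> centralizer G x"
  by (simp add: centralizer_def)

lemma centralizer_eq_carrier_iff:
  assumes x: "x \<in> carrier G"
  shows "centralizer G x = carrier G \<longleftrightarrow> x \<in> grp_center G"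
proof
  assume all: "centralizer G x = carrier G"
  show "x \<in> grp_center G"
  proof (rule centerI[OF x])
    fix g assume "g \<in> carrier G"
    then have "g \<in> centralizer G x" using all by simp
    then show "x \<otimes> g = g \<otimes> x" by (simp add: centralizer_def)
  qed
qed (auto simp: centralizer_def grp_center_def)

lemma card_orbit_conjugation_mult_card_centralizer:
  "x \<in> carrier G \<Longrightarrow> card (orbit G (conjugation G) x) * card (centralizer G x) = order G"
  using group_action.orbit_stabilizer_theorem[OF group_action_conjugation, of x]
    stabilizer_conjugation[of x]
  by simp

lemma orbit_conjugation_center:
  "z \<in> grp_center G \<Longrightarrow> orbit G (conjugation G) z = {z}"
  using center_closed[of z]
  by (auto simp: orbit_conjugation conjugation_eq_iff center_commute intro!: exI[of _ \<one>])

lemma orbit_conjugation_disjoint_center: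
  assumes "x \<in> carrier G" "x \<notin> grp_center G"
  shows "orbit G (conjugation G) x \<inter> grp_center G = {}"
proof (rule equals0I)
  fix y assume "y \<in> orbit G (conjugation G) x \<inter> grp_center G"
  then obtain g where g: "g \<in> carrier G" and c: "g \<otimes> x \<otimes> inv g \<in> grp_center G"
    by (auto simp: orbit_conjugation[OF assms(1)])
  define z where "z = g \<otimes> x \<otimes> inv g"
  have z: "z \<in> grp_center G" using c by (simp add: z_def)
  have "x = inv g \<otimes> z \<otimes> g"
    using g assms(1) by (simp add: z_def m_assoc)
  also have "\<dots> = z"
    using g z center_closed[OF z] by (simp add: center_commute[OF z] m_assoc)
  finally have "x = z" .
  then show False using z assms(2) by simp
qed

lemma funpow_conjugation:
  assumes g: "g \<in> carrier G" and y: "y \<in> carrier G"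
  shows "((\<lambda>y. g \<otimes> y \<otimes> inv g) ^^ n) y = g [^] n \<otimes> y \<otimes> inv (g [^] n)"
proof (induction n)
  case (Suc n)
  have "g [^] Suc n \<otimes> y \<otimes> inv (g [^] Suc n) = g \<otimes> (g [^] n \<otimes> y \<otimes> inv (g [^] n)) \<otimes> inv g"
    unfolding nat_pow_Suc2[OF g] using g y by (simp add: m_assoc inv_mult_group)
  then show ?case using Suc by simp
qed (use y in simp)

lemma commutator_closed: "a \<in> carrier G \<Longrightarrow> b \<in> carrier G \<Longrightarrow> commutator G a b \<in> carrier G"
  by (simp add: commutator_def)

lemma commutator_eq_one_iff:
  "a \<in> carrier G \<Longrightarrow> b \<in> carrier G \<Longrightarrow> commutator G a b = \<one> \<longleftrightarrow> a \<otimes> b = b \<otimes> a"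
  unfolding commutator_def
  using inv_solve_right'[of \<one> "a \<otimes> b \<otimes> inv a" b] inv_solve_right'[of b "a \<otimes> b" a] by simp

lemma mult_eq_commutator_mult:
  "a \<in> carrier G \<Longrightarrow> b \<in> carrier G \<Longrightarrow> a \<otimes> b = commutator G a b \<otimes> (b \<otimes> a)"
  by (simp add: commutator_def m_assoc)

lemma conjugate_eq_commutator_mult:
  "a \<in> carrier G \<Longrightarrow> b \<in> carrier G \<Longrightarrow> a \<otimes> b \<otimes> inv a = commutator G a b \<otimes> b"
  by (simp add: commutator_def m_assoc)

lemma prime_dvd_card_orbit_conjugation:
  assumes p: "prime p" and fin: "finite (carrier G)" and card: "card (carrier G) = p ^ n"
    and x: "x \<in> carrier G" "x \<notin> grp_center G"
  shows "p dvd card (orbit G (conjugation G) x)"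
proof -
  have orbit_mult: "card (orbit G (conjugation G) x) * card (centralizer G x) = p ^ n"
    using card_orbit_conjugation_mult_card_centralizer[OF x(1)] card by (simp add: order_def)
  then obtain i where i: "card (orbit G (conjugation G) x) = p ^ i"
    using divides_primepow_nat[OF p] by (metis dvd_triv_left)
  moreover have "i \<noteq> 0"
  proof
    assume "i = 0"
    then have "card (centralizer G x) = card (carrier G)" using orbit_mult i card by simp
    then have "centralizer G x = carrier G"
      using card_subset_eq[OF fin] by (auto simp: centralizer_def)
    then show False using x centralizer_eq_carrier_iff[OF x(1)] by simp
  qed
  ultimately show ?thesis by simp
qed

lemma prime_dvd_card_center:
  assumes p: "prime p" and fin: "finite (carrier G)" and card: "card (carrier G) = p ^ n"
    and n: "n > 0"
  shows "p dvd card (grp_center G)"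
proof -
  define f where "f x = (if x \<in> grp_center G then 0 else 1 :: nat)" for x
  have orbit_sum: "p dvd (\<Sum>y\<in>orb. f y)"
    if orb_mem: "orb \<in> orbits G (carrier G) (conjugation G)" for orb
  proof -
    obtain x where x: "x \<in> carrier G" and orb: "orb = orbit G (conjugation G) x"
      using orb_mem by (auto simp: orbits_def)
    show ?thesis
    proof (cases "x \<in> grp_center G")
      case True
      then show ?thesis by (simp add: orb orbit_conjugation_center f_def)
    next
      case False
      then have "(\<Sum>y\<in>orb. f y) = card orb"
        using orbit_conjugation_disjoint_center[OF x] by (simp add: orb f_def disjoint_iff)
      then show ?thesis
        using prime_dvd_card_orbit_conjugation[OF p fin card x False] by (simp add: orb)
    qed
  qed
  have "(\<Sum>x\<in>carrier G. f x) = card (carrier G - grp_center G)"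
    using fin by (simp add: f_def sum.If_cases Diff_eq)
  also have "\<dots> = p ^ n - card (grp_center G)"
    using card_Diff_subset[OF finite_subset[OF _ fin]] center_closed card by (simp add: subset_iff)
  finally have sum_eq: "(\<Sum>x\<in>carrier G. f x) = p ^ n - card (grp_center G)" .
  have "p dvd (\<Sum>orb\<in>orbits G (carrier G) (conjugation G). \<Sum>y\<in>orb. f y)"
    by (rule dvd_sum) (rule orbit_sum)
  then have "p dvd p ^ n - card (grp_center G)"
    unfolding group_action.disjoint_sum[OF group_action_conjugation fin] sum_eq .
  moreover have "p dvd p ^ n" using n by simp
  moreover have "grp_center G \<subseteq> carrier G" using center_closed by blast
  then have "card (grp_center G) \<le> p ^ n"
    using card_mono[OF fin] card by metis
  ultimately show ?thesis by (rule dvd_diffD1)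
qed

end

lemma mset_subseqs_subseteq: "l \<in> set (subseqs xs) \<Longrightarrow> mset l \<subseteq># mset xs"
proof (induction xs arbitrary: l)
  case (Cons a xs)
  have "mset l \<subseteq># add_mset a (mset xs)" if "mset l \<subseteq># mset xs" for l
    using that by (metis add_mset_add_single mset_subset_eq_add_left subset_mset.order_trans)
  with Cons show ?case by (auto simp: Let_def)
qed simp

lemma sum_list_of_nat_map: "(\<Sum>x\<leftarrow>xs. of_nat (f x)) = of_nat (\<Sum>x\<leftarrow>xs. f x)"
  by (induction xs) simp_all

context monoid
begin

lemma list_prod_Nil [simp]: "list_prod G [] = \<one>"
  by (simp add: list_prod_def)

lemma list_prod_Cons [simp]: "list_prod G (x # xs) = x \<otimes> list_prod G xs"
  by (simp add: list_prod_def)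

lemma nat_pow_left_commute:
  assumes x: "x \<in> carrier G" and y: "y \<in> carrier G"
  shows "x \<otimes> (x [^] (n :: nat) \<otimes> y) = x [^] n \<otimes> (x \<otimes> y)"
proof -
  have "x \<otimes> x [^] n = x [^] n \<otimes> x" using nat_pow_Suc2[OF x, of n] by simp
  then show ?thesis using x y by (simp flip: m_assoc)
qed

lemma list_prod_closed: "set xs \<subseteq> carrier G \<Longrightarrow> list_prod G xs \<in> carrier G"
  by (induction xs) auto

lemma list_prod_append:
  "set xs \<subseteq> carrier G \<Longrightarrow> set ys \<subseteq> carrier G \<Longrightarrow>
    list_prod G (xs @ ys) = list_prod G xs \<otimes> list_prod G ys"
  by (induction xs) (auto simp: m_assoc list_prod_closed)

end

section \<open>Groups of order p^3 and exponent p\<close>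

locale heisenberg_group = group G for G :: "('a, 'b) monoid_scheme" (structure) +
  fixes p :: nat
  assumes prime_p: "prime p"
    and card_carrier: "card (carrier G) = p ^ 3"
    and exponent: "x \<in> carrier G \<Longrightarrow> x [^] p = \<one>"
    and nonabelian: "\<exists>x\<in>carrier G. \<exists>y\<in>carrier G. x \<otimes> y \<noteq> y \<otimes> x"
begin

abbreviation Z :: "'a set" where "Z \<equiv> grp_center G"

lemma p_gt_1: "p > 1"
  using prime_p prime_gt_1_nat by blast

lemma finite_carrier: "finite (carrier G)"
  using card_carrier p_gt_1 by (intro card_ge_0_finite) simp

lemma pow_mod_p:
  assumes x: "x \<in> carrier G" shows "x [^] n = x [^] (n mod p)"
proof -
  have "x [^] n = x [^] (p * (n div p) + n mod p)" by simp
  also have "\<dots> = (x [^] p) [^] (n div p) \<otimes> x [^] (n mod p)"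
    using x by (simp only: nat_pow_mult nat_pow_pow nat_pow_closed)
  finally show ?thesis using x exponent by simp
qed

lemma pow_pred_p_eq_inv:
  assumes x: "x \<in> carrier G" shows "x [^] (p - 1) = inv x"
proof -
  have "x [^] (p - 1) \<otimes> x = \<one>"
    using exponent[OF x] p_gt_1 nat_pow_Suc[of x "p - 1"] by simp
  then show ?thesis using x by (simp add: inv_equality)
qed

lemma mem_subgroup_if_pow_mem:
  assumes H: "subgroup H G" and x: "x \<in> carrier G" and xd: "x [^] d \<in> H" and nd: "\<not> p dvd d"
  shows "x \<in> H"
proof -
  have "d \<noteq> 0" using nd by (metis dvd_0_right)
  moreover have "gcd d p = 1"
    using prime_imp_coprime[OF prime_p nd] by (simp add: coprime_commute)
  ultimately obtain e q where e: "d * e = p * q + 1" using bezout_nat[of d p] by auto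
  have "(d * e) mod p = 1"
    unfolding e using p_gt_1 mod_mult_self4[of p q 1] by simp
  then have "(x [^] d) [^] e = x"
    using pow_mod_p[OF x, of "d * e"] x by (simp add: nat_pow_pow)
  then show ?thesis using subgroup_nat_pow_closed[OF H xd, of e] by simp
qed

lemma card_subgroup_eq_prime_pow:
  assumes "subgroup H G" obtains i where "i \<le> 3" "card H = p ^ i"
proof -
  have "card H dvd p ^ 3"
    using lagrange[OF assms] card_carrier unfolding order_def by (metis dvd_triv_right)
  then show ?thesis using divides_primepow_nat[OF prime_p] that by auto
qed

lemma card_center_and_centralizer:
  "card Z = p \<and> (\<forall>x\<in>carrier G - Z. card (centralizer G x) = p ^ 2)"
proof -
  obtain a where a: "card Z = p ^ a"
    using card_subgroup_eq_prime_pow[OF center_subgroup] by blast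
  have "p dvd card Z"
    using prime_dvd_card_center[OF prime_p finite_carrier card_carrier] by simp
  then have a1: "a \<ge> 1"
    using a p_gt_1 by (cases a) auto
  have *: "a = 1 \<and> card (centralizer G x) = p ^ 2" if x: "x \<in> carrier G" "x \<notin> Z" for x
  proof -
    obtain b where b: "card (centralizer G x) = p ^ b"
      using card_subgroup_eq_prime_pow[OF centralizer_subgroup[OF x(1)]] by blast
    have fin_cent: "finite (centralizer G x)"
      using finite_carrier by (simp add: centralizer_def)
    have "Z \<subset> centralizer G x"
      using center_subset_centralizer[OF x(1)] mem_centralizer_self[OF x(1)] x(2) by blast
    then have "p ^ a < p ^ b"
      using psubset_card_mono[OF fin_cent \<open>Z \<subset> centralizer G x\<close>] a b by simp
    then have ab: "a < b" using p_gt_1 by simp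
    have "centralizer G x \<subset> carrier G"
      using centralizer_eq_carrier_iff[OF x(1)] x(2) by (auto simp: centralizer_def)
    then have "p ^ b < p ^ 3"
      using psubset_card_mono[OF finite_carrier \<open>centralizer G x \<subset> carrier G\<close>] b card_carrier
      by simp
    then have "b < 3" using p_gt_1 by simp
    then have "a = 1" "b = 2" using ab a1 by linarith+
    then show ?thesis using b by simp
  qed
  obtain x y where "x \<in> carrier G" "y \<in> carrier G" "x \<otimes> y \<noteq> y \<otimes> x"
    using nonabelian by blast
  then have "x \<notin> Z" using center_commute[of x y] by blast
  then have "a = 1" using *[OF \<open>x \<in> carrier G\<close>] by simp
  then show ?thesis using * a by (intro conjI ballI) simp_all
qed

lemma card_center: "card Z = p"
  using card_center_and_centralizer by blast

lemma card_centralizer: "x \<in> carrier G \<Longrightarrow> x \<notin> Z \<Longrightarrow> card (centralizer G x) = p ^ 2"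
  using card_center_and_centralizer by blast

lemma card_orbit_conjugation:
  assumes x: "x \<in> carrier G" "x \<notin> Z"
  shows "card (orbit G (conjugation G) x) = p"
proof -
  have "card (orbit G (conjugation G) x) * p ^ 2 = p * p ^ 2"
    using card_orbit_conjugation_mult_card_centralizer[OF x(1)] card_centralizer[OF x] card_carrier
    by (simp add: order_def power_eq_if)
  then show ?thesis using p_gt_1 by simp
qed

lemma pow_mult_center_inj:
  assumes x: "x \<in> carrier G" "x \<notin> Z" and ij: "i \<le> j" "j < p" and z: "z \<in> Z" "z' \<in> Z"
    and eq: "x [^] i \<otimes> z = x [^] j \<otimes> z'"
  shows "i = j \<and> z = z'"
proof -
  have zc: "z \<in> carrier G" "z' \<in> carrier G" using z center_closed by auto
  have "x [^] i \<otimes> x [^] (j - i) = x [^] j"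
    using x ij by (simp add: nat_pow_mult)
  then have "x [^] i \<otimes> z = x [^] i \<otimes> (x [^] (j - i) \<otimes> z')"
    using eq x zc by (simp add: m_assoc flip: m_assoc[of "x [^] i"])
  then have z_eq: "z = x [^] (j - i) \<otimes> z'" using x zc by simp
  then have "x [^] (j - i) = z \<otimes> inv z'" using x zc by (simp add: inv_solve_right)
  then have pow_Z: "x [^] (j - i) \<in> Z"
    using z subgroup.m_closed[OF center_subgroup] subgroup.m_inv_closed[OF center_subgroup] by simp
  have "i = j"
  proof (rule ccontr)
    assume "i \<noteq> j"
    then have "\<not> p dvd j - i" using ij by (intro nat_dvd_not_less) auto
    then show False using mem_subgroup_if_pow_mem[OF center_subgroup x(1) pow_Z] x(2) by simp
  qed
  then show ?thesis using z_eq zc by simp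
qed

lemma centralizer_eq:
  assumes x: "x \<in> carrier G" "x \<notin> Z"
  shows "centralizer G x = {x [^] i \<otimes> z | i z. i < p \<and> z \<in> Z}"
proof -
  define F where "F = (\<lambda>(i, z). x [^] (i :: nat) \<otimes> z)"
  have img: "{x [^] i \<otimes> z | i z. i < p \<and> z \<in> Z} = F ` ({..<p} \<times> Z)"
    by (auto simp: F_def)
  have "inj_on F ({..<p} \<times> Z)"
  proof (rule inj_onI)
    fix u v assume u: "u \<in> {..<p} \<times> Z" and v: "v \<in> {..<p} \<times> Z" and eq: "F u = F v"
    obtain i z j z' where uv: "u = (i, z)" "v = (j, z')" by (cases u, cases v)
    have "i < p" "j < p" "z \<in> Z" "z' \<in> Z" and eq': "x [^] i \<otimes> z = x [^] j \<otimes> z'"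
      using u v eq by (simp_all add: uv F_def)
    then show "u = v"
      using pow_mult_center_inj[OF x, of i j z z'] pow_mult_center_inj[OF x, of j i z' z]
      by (cases "i \<le> j") (simp_all add: uv)
  qed
  then have card_img: "card (F ` ({..<p} \<times> Z)) = p ^ 2"
    by (simp add: card_image card_cartesian_product card_center power2_eq_square)
  have sub: "F ` ({..<p} \<times> Z) \<subseteq> centralizer G x"
  proof clarify
    fix i :: nat and z assume z: "z \<in> Z"
    have zc: "z \<in> carrier G" using center_closed[OF z] .
    have "x [^] i \<otimes> z \<otimes> x = x [^] i \<otimes> x \<otimes> z"
      using x zc center_commute[OF z x(1)] by (simp add: m_assoc)
    also have "\<dots> = x \<otimes> (x [^] i \<otimes> z)"
      using x zc nat_pow_comm[of x i 1] by (simp add: m_assoc)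
    finally have "x [^] i \<otimes> z \<otimes> x = x \<otimes> (x [^] i \<otimes> z)" .
    then show "F (i, z) \<in> centralizer G x"
      using x z center_closed[OF z] by (simp add: F_def centralizer_def)
  qed
  moreover have "finite (centralizer G x)"
    using finite_carrier by (simp add: centralizer_def)
  ultimately have "F ` ({..<p} \<times> Z) = centralizer G x"
    using card_subset_eq[OF _ sub] card_img card_centralizer[OF x] by simp
  then show ?thesis using img by simp
qed

lemma center_eq_powers:
  assumes s: "s \<in> Z" "s \<noteq> \<one>"
  shows "Z = {s [^] i | i. i < p}"
proof -
  have sc: "s \<in> carrier G" using s center_closed by simp
  have inj: "inj_on (\<lambda>i :: nat. s [^] i) {..<p}"
  proof -
    have "i = j" if ij: "i \<le> j" "j < p" and eq: "s [^] i = s [^] j" for i j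
    proof (rule ccontr)
      assume "i \<noteq> j"
      then have nd: "\<not> p dvd j - i" using ij nat_dvd_not_less[of "j - i" p] by auto
      have "s [^] i \<otimes> s [^] (j - i) = s [^] j"
        using ij sc by (simp add: nat_pow_mult)
      then have "s [^] i \<otimes> s [^] (j - i) = s [^] i \<otimes> \<one>"
        using eq sc by simp
      then have "s [^] (j - i) \<in> {\<one>}" using sc by simp
      then show False
        using mem_subgroup_if_pow_mem[OF triv_subgroup sc _ nd] s(2) by simp
    qed
    then show ?thesis by (intro inj_onI) (metis lessThan_iff linorder_le_cases)
  qed
  have "{s [^] i | i. i < p} = (\<lambda>i. s [^] i) ` {..<p}" by auto
  then have "card {s [^] i | i. i < p} = p"
    using card_image[OF inj] by simp
  moreover have sub: "{s [^] i | i. i < p} \<subseteq> Z"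
    using subgroup_nat_pow_closed[OF center_subgroup s(1)] by blast
  moreover have "finite Z"
    using finite_subset[OF _ finite_carrier] center_closed by blast
  ultimately show ?thesis
    using card_subset_eq[OF \<open>finite Z\<close> sub] card_center by simp
qed

text \<open>
  Conjugation by x permutes the conjugacy class of x, which has p elements, with period p and
  fixes x; by counting fixed points modulo p it fixes the whole class.
\<close>

lemma conjugate_mem_centralizer:
  assumes x: "x \<in> carrier G" "x \<notin> Z" and h: "h \<in> carrier G"
  shows "h \<otimes> x \<otimes> inv h \<in> centralizer G x"
proof -
  define A where "A = orbit G (conjugation G) x"
  define f where "f y = x \<otimes> y \<otimes> inv x" for y
  have A: "A = {g \<otimes> x \<otimes> inv g | g. g \<in> carrier G}"
    using orbit_conjugation[OF x(1)] by (simp add: A_def)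
  have A_carrier: "A \<subseteq> carrier G" using x(1) by (auto simp: A)
  have fin_A: "finite A" using finite_subset[OF A_carrier finite_carrier] .
  have "f (g \<otimes> x \<otimes> inv g) = (x \<otimes> g) \<otimes> x \<otimes> inv (x \<otimes> g)" if "g \<in> carrier G" for g
    using that x(1) by (simp add: f_def m_assoc inv_mult_group)
  then have f_A: "f ` A \<subseteq> A" using x(1) by (auto simp: A)
  have f_period: "\<forall>y\<in>A. (f ^^ p) y = y"
    using funpow_conjugation[OF x(1)] exponent[OF x(1)] A_carrier by (auto simp: f_def[abs_def])
  define fixed where "fixed = {y\<in>A. f y = y}"
  have "card fixed mod p = card A mod p"
    unfolding fixed_def by (rule card_fixed_points_mod_prime[OF fin_A prime_p f_A f_period])
  then have "p dvd card fixed"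
    using card_orbit_conjugation[OF x] by (simp add: A_def dvd_eq_mod_eq_0)
  moreover have "x \<in> fixed"
    using x(1) by (auto simp: fixed_def A f_def m_assoc intro!: exI[of _ \<one>])
  then have "card fixed > 0"
    using fin_A by (auto simp: fixed_def card_gt_0_iff)
  moreover have "card fixed \<le> p"
    using card_mono[OF fin_A] card_orbit_conjugation[OF x] by (simp add: fixed_def A_def)
  ultimately have "card fixed = card A"
    using card_orbit_conjugation[OF x] nat_dvd_not_less[of "card fixed" p]
    by (fastforce simp: A_def)
  then have "fixed = A"
    using card_subset_eq[OF fin_A] by (auto simp: fixed_def)
  moreover have "h \<otimes> x \<otimes> inv h \<in> A" using h by (auto simp: A)
  ultimately have "x \<otimes> (h \<otimes> x \<otimes> inv h) \<otimes> inv x = h \<otimes> x \<otimes> inv h"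
    by (auto simp: fixed_def f_def)
  then show ?thesis
    using conjugation_eq_iff[of x "h \<otimes> x \<otimes> inv h"] x(1) h by (simp add: centralizer_def)
qed

lemma centralizer_inter_subset_center:
  assumes x: "x \<in> carrier G" and y: "y \<in> carrier G" and xy: "x \<otimes> y \<noteq> y \<otimes> x"
  shows "centralizer G x \<inter> centralizer G y \<subseteq> Z"
proof
  fix u assume u: "u \<in> centralizer G x \<inter> centralizer G y"
  have "x \<notin> Z" using xy center_commute[OF _ y] by blast
  then obtain i z where i: "i < p" and z: "z \<in> Z" and u_eq: "u = x [^] i \<otimes> z"
    using u centralizer_eq[OF x] by auto
  have zc: "z \<in> carrier G" using center_closed[OF z] .
  show "u \<in> Z"
  proof (cases "i = 0")
    case True
    then show ?thesis using u_eq z zc by simp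
  next
    case False
    have "u \<otimes> inv z \<in> centralizer G y"
      using u z center_subset_centralizer[OF y] subgroup.m_closed[OF centralizer_subgroup[OF y]]
        subgroup.m_inv_closed[OF centralizer_subgroup[OF y]] by blast
    moreover have "u \<otimes> inv z = x [^] i" using u_eq x zc by (simp add: m_assoc)
    ultimately have "x \<in> centralizer G y"
      using mem_subgroup_if_pow_mem[OF centralizer_subgroup[OF y] x] i False nat_dvd_not_less
      by auto
    then show ?thesis using xy by (simp add: centralizer_def)
  qed
qed

text \<open>[a, b] lies in C(a) \<inter> C(b), which is Z unless a and b commute.\<close>

lemma commutator_mem_center:
  assumes a: "a \<in> carrier G" and b: "b \<in> carrier G"
  shows "commutator G a b \<in> Z"
proof (cases "a \<otimes> b = b \<otimes> a")
  case True
  then show ?thesis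
    using commutator_eq_one_iff[OF a b] subgroup.one_closed[OF center_subgroup] by simp
next
  case False
  then have a_nc: "a \<notin> Z" and b_nc: "b \<notin> Z"
    using center_commute a b by metis+
  have "commutator G a b = (a \<otimes> b \<otimes> inv a) \<otimes> inv b"
    by (simp add: commutator_def)
  moreover have "a \<otimes> b \<otimes> inv a \<in> centralizer G b"
    using conjugate_mem_centralizer[OF b b_nc a] .
  ultimately have "commutator G a b \<in> centralizer G b"
    using b mem_centralizer_self[OF b] centralizer_subgroup[OF b]
    by (simp add: subgroup.m_closed subgroup.m_inv_closed)
  moreover have "commutator G a b = a \<otimes> inv (b \<otimes> a \<otimes> inv b)"
    using a b by (simp add: commutator_def inv_mult_group m_assoc)
  moreover have "b \<otimes> a \<otimes> inv b \<in> centralizer G a"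
    using conjugate_mem_centralizer[OF a a_nc b] .
  ultimately have "commutator G a b \<in> centralizer G a \<inter> centralizer G b"
    using a mem_centralizer_self[OF a] centralizer_subgroup[OF a]
    by (simp add: subgroup.m_closed subgroup.m_inv_closed)
  then show ?thesis
    using centralizer_inter_subset_center[OF a b False] by blast
qed

lemma commutator_mult_left:
  assumes a: "a \<in> carrier G" and b: "b \<in> carrier G" and c: "c \<in> carrier G"
  shows "commutator G (a \<otimes> b) c = commutator G a c \<otimes> commutator G b c"
proof -
  define k where "k = commutator G b c"
  have k: "k \<in> Z" using commutator_mem_center[OF b c] by (simp add: k_def)
  have kc: "k \<in> carrier G" using center_closed[OF k] .
  have "commutator G (a \<otimes> b) c = a \<otimes> (b \<otimes> c \<otimes> inv b) \<otimes> inv a \<otimes> inv c"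
    using a b c by (simp add: commutator_def m_assoc inv_mult_group)
  also have "\<dots> = a \<otimes> (k \<otimes> c) \<otimes> inv a \<otimes> inv c"
    using conjugate_eq_commutator_mult[OF b c] by (simp add: k_def)
  also have "\<dots> = k \<otimes> (a \<otimes> c \<otimes> inv a \<otimes> inv c)"
    using a c kc center_left_commute[OF k a c] by (simp add: m_assoc)
  also have "\<dots> = commutator G a c \<otimes> k"
    using center_commute[OF k commutator_closed[OF a c]] by (simp add: commutator_def)
  finally show ?thesis by (simp add: k_def)
qed

lemma commutator_mult_right:
  assumes a: "a \<in> carrier G" and b: "b \<in> carrier G" and c: "c \<in> carrier G"
  shows "commutator G c (a \<otimes> b) = commutator G c a \<otimes> commutator G c b"
proof -
  define k where "k = commutator G c a"
  define l where "l = commutator G c b"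
  have k: "k \<in> Z" using commutator_mem_center[OF c a] by (simp add: k_def)
  have l: "l \<in> Z" using commutator_mem_center[OF c b] by (simp add: l_def)
  have kc: "k \<in> carrier G" and lc: "l \<in> carrier G" using center_closed k l by auto
  have "c \<otimes> (a \<otimes> b) \<otimes> inv c = (c \<otimes> a \<otimes> inv c) \<otimes> (c \<otimes> b \<otimes> inv c)"
    using a b c by (simp add: m_assoc)
  also have "\<dots> = (k \<otimes> a) \<otimes> (l \<otimes> b)"
    using conjugate_eq_commutator_mult[OF c a] conjugate_eq_commutator_mult[OF c b]
    by (simp add: k_def l_def)
  also have "\<dots> = k \<otimes> l \<otimes> (a \<otimes> b)"
    using a b kc lc center_left_commute[OF l a b] by (simp add: m_assoc)
  finally have "commutator G c (a \<otimes> b) = k \<otimes> l \<otimes> (a \<otimes> b) \<otimes> inv (a \<otimes> b)"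
    by (simp add: commutator_def)
  then show ?thesis using a b kc lc by (simp add: m_assoc k_def l_def)
qed

lemma commutator_center_right: "a \<in> carrier G \<Longrightarrow> z \<in> Z \<Longrightarrow> commutator G a z = \<one>"
  using commutator_eq_one_iff center_closed center_commute by metis

section \<open>Product-one subsequences\<close>

text \<open>Exponent of z to the base s; meaningful only for z \<in> Z and s \<noteq> \<one>.\<close>

definition dlog :: "'a \<Rightarrow> 'a \<Rightarrow> nat" where
  "dlog s z = (SOME i. i < p \<and> z = s [^] i)"

lemma pow_dlog:
  assumes "s \<in> Z" "s \<noteq> \<one>" "z \<in> Z" shows "s [^] dlog s z = z"
proof -
  have "\<exists>i. i < p \<and> z = s [^] i" using center_eq_powers[OF assms(1,2)] assms(3) by blast
  then show ?thesis unfolding dlog_def by (metis (mono_tags, lifting) someI_ex)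
qed

lemma commutator_list_prod_left:
  assumes s: "s \<in> Z" "s \<noteq> \<one>" and c: "c \<in> carrier G" and ys: "set ys \<subseteq> carrier G"
  shows "commutator G (list_prod G ys) c = s [^] (\<Sum>y\<leftarrow>ys. dlog s (commutator G y c))"
  using ys
proof (induction ys)
  case Nil
  then show ?case using commutator_eq_one_iff[OF one_closed c] c by simp
next
  case (Cons y ys)
  then have y: "y \<in> carrier G" and ys': "set ys \<subseteq> carrier G" by auto
  have "commutator G (list_prod G (y # ys)) c = commutator G y c \<otimes> commutator G (list_prod G ys) c"
    using commutator_mult_left[OF y list_prod_closed[OF ys'] c] by simp
  also have "\<dots> = s [^] dlog s (commutator G y c) \<otimes> s [^] (\<Sum>y\<leftarrow>ys. dlog s (commutator G y c))"
    using pow_dlog[OF s commutator_mem_center[OF y c]] Cons.IH[OF ys'] by simp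
  finally show ?case using center_closed[OF s(1)] by (simp add: nat_pow_mult)
qed

lemma commutator_list_prod_right:
  assumes s: "s \<in> Z" "s \<noteq> \<one>" and c: "c \<in> carrier G" and ys: "set ys \<subseteq> carrier G"
  shows "commutator G c (list_prod G ys) = s [^] (\<Sum>y\<leftarrow>ys. dlog s (commutator G c y))"
  using ys
proof (induction ys)
  case Nil
  then show ?case using commutator_eq_one_iff[OF c one_closed] c by simp
next
  case (Cons y ys)
  then have y: "y \<in> carrier G" and ys': "set ys \<subseteq> carrier G" by auto
  have "commutator G c (list_prod G (y # ys)) = commutator G c y \<otimes> commutator G c (list_prod G ys)"
    using commutator_mult_right[OF y list_prod_closed[OF ys'] c] by simp
  also have "\<dots> = s [^] dlog s (commutator G c y) \<otimes> s [^] (\<Sum>y\<leftarrow>ys. dlog s (commutator G c y))"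
    using pow_dlog[OF s commutator_mem_center[OF c y]] Cons.IH[OF ys'] by simp
  finally show ?case using center_closed[OF s(1)] by (simp add: nat_pow_mult)
qed

lemma pow_eq_one_if_dvd: "x \<in> carrier G \<Longrightarrow> int p dvd int n \<Longrightarrow> x [^] n = \<one>"
  using pow_mod_p[of x n] by simp

text \<open>
  For non-commuting g, y, the map w \<mapsto> ([w, y], [g, w]), read in the basis [g, y] of Z, is a
  homomorphism G \<rightarrow> (\<int>/p)^2 whose kernel C(g) \<inter> C(y) is Z.
\<close>

theorem subseq_prod_in_center:
  assumes xs: "set xs \<subseteq> carrier G" and len: "2 * p - 1 \<le> length xs"
  shows "\<exists>l\<in>set (subseqs xs). l \<noteq> [] \<and> list_prod G l \<in> Z"
proof -
  obtain g y where g: "g \<in> carrier G" and y: "y \<in> carrier G" and gy: "g \<otimes> y \<noteq> y \<otimes> g"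
    using nonabelian by blast
  define s where "s = commutator G g y"
  have s: "s \<in> Z" "s \<noteq> \<one>"
    using commutator_mem_center[OF g y] commutator_eq_one_iff[OF g y] gy by (simp_all add: s_def)
  define v where "v x = (int (dlog s (commutator G x y)), int (dlog s (commutator G g x)))" for x
  obtain l where l: "l \<in> set (subseqs xs)" "l \<noteq> []"
    and dvd1: "int p dvd (\<Sum>x\<leftarrow>l. fst (v x))" and dvd2: "int p dvd (\<Sum>x\<leftarrow>l. snd (v x))"
    using zero_sum_subseq[OF prime_p len, of v] by blast
  have lc: "set l \<subseteq> carrier G"
    using set_mset_mono[OF mset_subseqs_subseteq[OF l(1)]] xs by auto
  have sc: "s \<in> carrier G" using center_closed[OF s(1)] .
  have "commutator G (list_prod G l) y = \<one>"
    using commutator_list_prod_left[OF s y lc] pow_eq_one_if_dvd[OF sc] dvd1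
    by (simp add: v_def sum_list_of_nat_map)
  moreover have "commutator G g (list_prod G l) = \<one>"
    using commutator_list_prod_right[OF s g lc] pow_eq_one_if_dvd[OF sc] dvd2
    by (simp add: v_def sum_list_of_nat_map)
  ultimately have "list_prod G l \<in> centralizer G g \<inter> centralizer G y"
    using commutator_eq_one_iff list_prod_closed[OF lc] g y by (auto simp: centralizer_def)
  then show ?thesis
    using centralizer_inter_subset_center[OF g y gy] l by blast
qed

lemma list_prod_central_multiples:
  assumes g: "g \<in> carrier G" and xs: "\<forall>x\<in>set xs. \<exists>c\<in>Z. x = c \<otimes> g"
  shows "\<exists>C\<in>Z. list_prod G xs = g [^] length xs \<otimes> C"
  using xs
proof (induction xs)
  case Nil
  then show ?case using subgroup.one_closed[OF center_subgroup] g by force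
next
  case (Cons x xs)
  obtain C where C: "C \<in> Z" "list_prod G xs = g [^] length xs \<otimes> C" using Cons by auto
  obtain c where c: "c \<in> Z" "x = c \<otimes> g" using Cons.prems by auto
  have cc: "c \<in> carrier G" "C \<in> carrier G" using c C center_closed by auto
  have "list_prod G (x # xs) = c \<otimes> (g \<otimes> g [^] length xs) \<otimes> C"
    using c C g cc by (simp add: m_assoc)
  also have "\<dots> = g [^] length (x # xs) \<otimes> (c \<otimes> C)"
    using g cc center_left_commute[OF c(1)] nat_pow_left_commute[OF g]
    by (simp add: nat_pow_Suc2 m_assoc del: nat_pow_Suc)
  finally show ?case
    using subgroup.m_closed[OF center_subgroup c(1) C(1)] by blast
qed

lemma mult_list_prod_eq_pow_mult:
  assumes t: "t \<in> Z" and y: "y \<in> carrier G" and xs: "set xs \<subseteq> carrier G"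
    and comm: "\<forall>x\<in>set xs. commutator G y x = t"
  shows "y \<otimes> list_prod G xs = t [^] length xs \<otimes> (list_prod G xs \<otimes> y)"
  using xs comm
proof (induction xs)
  case Nil
  then show ?case using y by simp
next
  case (Cons x xs)
  have x: "x \<in> carrier G" and xs': "set xs \<subseteq> carrier G" using Cons.prems by auto
  have tc: "t \<in> carrier G" using center_closed[OF t] .
  have P: "list_prod G xs \<in> carrier G" using list_prod_closed[OF xs'] .
  have "y \<otimes> x = t \<otimes> (x \<otimes> y)"
    using mult_eq_commutator_mult[OF y x] Cons.prems(2) by simp
  then have "y \<otimes> list_prod G (x # xs) = t \<otimes> (x \<otimes> (y \<otimes> list_prod G xs))"
    using x y P tc by (simp flip: m_assoc)
  also have "\<dots> = t \<otimes> (x \<otimes> (t [^] length xs \<otimes> (list_prod G xs \<otimes> y)))"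
    using Cons by simp
  also have "\<dots> = t [^] length (x # xs) \<otimes> (list_prod G (x # xs) \<otimes> y)"
    using center_left_commute[OF subgroup_nat_pow_closed[OF center_subgroup t], of x] x y P tc
      nat_pow_left_commute[OF tc]
    by (simp add: nat_pow_Suc2 m_assoc del: nat_pow_Suc)
  finally show ?case .
qed

text \<open>
  Moving y to the left across the last m terms of xs multiplies the product by t^m; choose m with
  t^m = T\<inverse>.
\<close>

lemma exists_rearrangement_prod_one:
  assumes t: "t \<in> Z" "t \<noteq> \<one>" and y: "y \<in> carrier G"
    and xs: "set xs \<subseteq> carrier G" and ys: "set ys \<subseteq> carrier G"
    and comm: "\<forall>x\<in>set xs. commutator G y x = t" and len: "p - 1 \<le> length xs"
    and central: "list_prod G xs \<otimes> (y \<otimes> list_prod G ys) \<in> Z"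
  shows "\<exists>L. mset L = mset xs + mset (y # ys) \<and> list_prod G L = \<one>"
proof -
  define T where "T = list_prod G xs \<otimes> (y \<otimes> list_prod G ys)"
  have T: "T \<in> Z" using central by (simp add: T_def)
  obtain m where m: "m < p" "inv T = t [^] m"
    using center_eq_powers[OF t] subgroup.m_inv_closed[OF center_subgroup T] by auto
  define A where "A = take (length xs - m) xs"
  define B where "B = drop (length xs - m) xs"
  have AB: "A @ B = xs" by (simp add: A_def B_def)
  have len_B: "length B = m" using m(1) len by (simp add: B_def)
  have A: "set A \<subseteq> carrier G" and B: "set B \<subseteq> carrier G"
    using xs by (auto simp: A_def B_def dest: in_set_takeD in_set_dropD)
  have comm_B: "\<forall>x\<in>set B. commutator G y x = t"
    using comm by (auto simp: B_def dest: in_set_dropD)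
  have tm: "t [^] m \<in> Z" using subgroup_nat_pow_closed[OF center_subgroup t(1)] .
  note PA = list_prod_closed[OF A] and PB = list_prod_closed[OF B] and Pys = list_prod_closed[OF ys]
  have PX: "list_prod G xs = list_prod G A \<otimes> list_prod G B"
    using list_prod_append[OF A B] by (simp add: AB)
  define L where "L = A @ y # B @ ys"
  have "list_prod G L = list_prod G A \<otimes> ((y \<otimes> list_prod G B) \<otimes> list_prod G ys)"
    using A B ys y PB Pys by (simp add: L_def list_prod_append m_assoc)
  also have "\<dots> = list_prod G A \<otimes> (t [^] m \<otimes> (list_prod G B \<otimes> y) \<otimes> list_prod G ys)"
    using mult_list_prod_eq_pow_mult[OF t(1) y B comm_B] len_B by simp
  also have "\<dots> = t [^] m \<otimes> T"
    using PA PB Pys y center_closed[OF tm] center_left_commute[OF tm]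
    by (simp add: T_def m_assoc PX)
  also have "\<dots> = \<one>"
    using m(2) center_closed[OF T] by (simp flip: m(2))
  finally have "list_prod G L = \<one>" .
  moreover have "mset L = mset xs + mset (y # ys)"
    by (simp add: L_def flip: AB)
  ultimately show ?thesis by blast
qed

lemma conjugate_eq_center_mult:
  assumes g: "g \<in> carrier G" and "conjugate G g x"
  shows "\<exists>c\<in>Z. x = c \<otimes> g"
proof -
  obtain h where h: "h \<in> carrier G" "x = h \<otimes> g \<otimes> inv h"
    using assms(2) by (auto simp: conjugate_def)
  then have "x = commutator G h g \<otimes> g"
    using conjugate_eq_commutator_mult[OF h(1) g] by simp
  then show ?thesis using commutator_mem_center[OF h(1) g] by blast
qed

lemma commuting_mem_zclass:
  assumes g0: "g0 \<in> carrier G" and g: "g \<in> zclass G p g0" "g \<notin> Z"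
    and y: "y \<in> carrier G" "y \<notin> Z" and gy: "g \<otimes> y = y \<otimes> g"
  shows "y \<in> zclass G p g0"
proof -
  obtain k u where k: "1 \<le> k" "k \<le> p - 1" and u: "u \<in> Z" and g_eq: "g = g0 [^] k \<otimes> u"
    using g(1) by (auto simp: zclass_def)
  have uc: "u \<in> carrier G" using center_closed[OF u] .
  have gc: "g \<in> carrier G" using g_eq g0 uc by simp
  have "y \<in> centralizer G g" using y(1) gy by (simp add: centralizer_def)
  then obtain i z where i: "i < p" and z: "z \<in> Z" and y_eq: "y = g [^] i \<otimes> z"
    using centralizer_eq[OF gc g(2)] by auto
  have zc: "z \<in> carrier G" using center_closed[OF z] .
  have "i \<noteq> 0"
  proof
    assume "i = 0"
    then have "y = z" using y_eq zc by simp
    then show False using y(2) z by simp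
  qed
  have "y = g0 [^] (k * i) \<otimes> (u [^] i \<otimes> z)"
    using y_eq g_eq pow_mult_distrib[of "g0 [^] k" u i] center_commute[OF u] g0 uc zc
    by (simp add: nat_pow_pow m_assoc)
  also have "\<dots> = g0 [^] ((k * i) mod p) \<otimes> (u [^] i \<otimes> z)"
    using pow_mod_p[OF g0] by simp
  finally have y_eq': "y = g0 [^] ((k * i) mod p) \<otimes> (u [^] i \<otimes> z)" .
  have "\<not> p dvd k * i"
    using k i \<open>i \<noteq> 0\<close> p_gt_1 prime_p nat_dvd_not_less[of k p] nat_dvd_not_less[of i p]
    by (auto simp: prime_dvd_mult_iff)
  then have "1 \<le> (k * i) mod p" "(k * i) mod p \<le> p - 1"
    using p_gt_1 by (auto simp: dvd_eq_mod_eq_0 less_Suc_eq_le[symmetric] Suc_le_eq)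
  moreover have "u [^] i \<otimes> z \<in> Z"
    using subgroup.m_closed[OF center_subgroup subgroup_nat_pow_closed[OF center_subgroup u] z] .
  ultimately show ?thesis using y_eq' by (auto simp: zclass_def)
qed

lemma commutator_center_mult_right:
  assumes y: "y \<in> carrier G" and c: "c \<in> Z" and g: "g \<in> carrier G"
  shows "commutator G y (c \<otimes> g) = commutator G y g"
  using commutator_mult_right[OF center_closed[OF c] g y] commutator_center_right[OF y c]
    commutator_closed[OF y g] by simp

text \<open>
  A central subsequence of g\<inverse> # ys that uses g\<inverse> is compensated by taking one term c g fewer.
\<close>

lemma exists_central_block:
  assumes g: "g \<in> carrier G" "g \<notin> Z"
    and xs: "length xs = p" "\<forall>x\<in>set xs. \<exists>c\<in>Z. x = c \<otimes> g"
    and ys: "set ys \<subseteq> carrier G" "2 * p - 2 \<le> length ys"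
  shows "\<exists>k J. p - 1 \<le> k \<and> J \<in> set (subseqs ys) \<and> J \<noteq> [] \<and>
    list_prod G (take k xs) \<otimes> list_prod G J \<in> Z"
proof -
  have prod_take: "\<exists>C\<in>Z. list_prod G (take k xs) = g [^] k \<otimes> C" if "k \<le> p" for k
    using list_prod_central_multiples[OF g(1), of "take k xs"] xs that
    by (auto dest: in_set_takeD)
  have "set (inv g # ys) \<subseteq> carrier G" "2 * p - 1 \<le> length (inv g # ys)"
    using g(1) ys p_gt_1 by auto
  then obtain l where l: "l \<in> set (subseqs (inv g # ys))" "l \<noteq> []" "list_prod G l \<in> Z"
    using subseq_prod_in_center by blast
  then consider "l \<in> set (subseqs ys)" | J where "l = inv g # J" "J \<in> set (subseqs ys)"
    by (auto simp: Let_def)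
  then show ?thesis
  proof cases
    case 1
    obtain C where C: "C \<in> Z" "list_prod G (take p xs) = g [^] p \<otimes> C"
      using prod_take by blast
    then have "list_prod G (take p xs) \<otimes> list_prod G l \<in> Z"
      using g(1) exponent center_closed subgroup.m_closed[OF center_subgroup C(1) l(3)] by simp
    then show ?thesis using 1 l(2) by (intro exI[of _ p] exI[of _ l]) simp
  next
    case (2 J)
    have Jc: "set J \<subseteq> carrier G"
      using set_mset_mono[OF mset_subseqs_subseteq[OF 2(2)]] ys(1) by auto
    have "J \<noteq> []"
      using l(3) 2(1) g subgroup.m_inv_closed[OF center_subgroup, of "inv g"] by auto
    obtain C where C: "C \<in> Z" "list_prod G (take (p - 1) xs) = inv g \<otimes> C"
      using prod_take[of "p - 1"] pow_pred_p_eq_inv[OF g(1)] by auto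
    then have "list_prod G (take (p - 1) xs) \<otimes> list_prod G J = C \<otimes> list_prod G l"
      using C 2(1) g(1) center_closed[OF C(1)] list_prod_closed[OF Jc]
        center_commute[OF C(1), of "inv g"] by (simp add: m_assoc flip: m_assoc[of C])
    then show ?thesis
      using subgroup.m_closed[OF center_subgroup C(1) l(3)] 2(2) \<open>J \<noteq> []\<close> by fastforce
  qed
qed

lemma exists_product_one_sublist:
  assumes g: "g \<in> carrier G" "g \<notin> Z"
    and xs: "length xs = p" "\<forall>x\<in>set xs. \<exists>c\<in>Z. x = c \<otimes> g"
    and ys: "length ys = 2 * p - 2" "set ys \<subseteq> carrier G" "\<forall>y\<in>set ys. g \<otimes> y \<noteq> y \<otimes> g"
  shows "\<exists>L. L \<noteq> [] \<and> mset L \<subseteq># mset xs + mset ys \<and> list_prod G L = \<one>"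
proof -
  obtain k J where k: "p - 1 \<le> k" and J: "J \<in> set (subseqs ys)" "J \<noteq> []"
    and central: "list_prod G (take k xs) \<otimes> list_prod G J \<in> Z"
    using exists_central_block[OF g xs ys(2)] ys(1) by auto
  obtain y zs where J_eq: "J = y # zs" using J(2) by (cases J) auto
  have J_sub: "mset J \<subseteq># mset ys" using mset_subseqs_subseteq[OF J(1)] .
  then have y: "y \<in> carrier G" "g \<otimes> y \<noteq> y \<otimes> g" and zs: "set zs \<subseteq> carrier G"
    using set_mset_mono[OF J_sub] ys(2,3) by (auto simp: J_eq)
  define t where "t = commutator G y g"
  have t: "t \<in> Z" "t \<noteq> \<one>"
    using commutator_mem_center[OF y(1) g(1)] commutator_eq_one_iff[OF y(1) g(1)] y(2)
    by (auto simp: t_def)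
  have X: "set (take k xs) \<subseteq> carrier G" "\<forall>x\<in>set (take k xs). commutator G y x = t"
    using xs(2) commutator_center_mult_right[OF y(1) _ g(1)] g(1) center_closed
    by (auto simp: t_def dest!: in_set_takeD)
  obtain L where L: "mset L = mset (take k xs) + mset J" "list_prod G L = \<one>"
    using exists_rearrangement_prod_one[OF t y(1) X(1) zs X(2)] k xs(1) central
    by (auto simp: J_eq)
  have "mset (take k xs) \<subseteq># mset xs"
    by (metis append_take_drop_id mset_append mset_subset_eq_add_left)
  then have "mset L \<subseteq># mset xs + mset ys"
    using J_sub by (simp add: L(1) subset_mset.add_mono)
  moreover have "L \<noteq> []" using L(1) J(2) by (cases L) auto
  ultimately show ?thesis using L(2) by blast
qed

theorem exists_product_one_subseq:
  assumes S: "set_mset S \<subseteq> carrier G" "size S = 3 * p - 2" "\<forall>x\<in>#S. x \<notin> Z"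
    and g0: "g0 \<in> carrier G"
    and K_size: "size (filter_mset (\<lambda>x. x \<in> zclass G p g0) S) = p"
    and K_conj: "\<forall>x\<in>#filter_mset (\<lambda>x. x \<in> zclass G p g0) S.
      \<forall>y\<in>#filter_mset (\<lambda>x. x \<in> zclass G p g0) S. conjugate G x y"
  shows "\<exists>T. T \<subseteq># S \<and> product_one G T"
proof -
  define K where "K = zclass G p g0"
  obtain xs where xs: "mset xs = filter_mset (\<lambda>x. x \<in> K) S" using ex_mset by blast
  obtain ys where ys: "mset ys = filter_mset (\<lambda>x. x \<notin> K) S" using ex_mset by blast
  have S_eq: "S = mset xs + mset ys"
    by (simp add: xs ys multiset_partition[symmetric])
  have len_xs: "length xs = p"
    using K_size by (simp flip: size_mset add: xs K_def)
  have len_ys: "length ys = 2 * p - 2"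
    using arg_cong[OF S_eq, of size] S(2) len_xs by simp
  have xs_mem: "x \<in> carrier G \<and> x \<notin> Z \<and> x \<in> K" if "x \<in> set xs" for x
    using that S by (auto simp flip: set_mset_mset simp: xs)
  have ys_mem: "y \<in> carrier G \<and> y \<notin> Z \<and> y \<notin> K" if "y \<in> set ys" for y
    using that S by (auto simp flip: set_mset_mset simp: ys)
  define g where "g = hd xs"
  have g: "g \<in> set xs" using len_xs p_gt_1 by (cases xs) (auto simp: g_def)
  then have gc: "g \<in> carrier G" and g_nc: "g \<notin> Z" and gK: "g \<in> K" using xs_mem by auto
  have "\<forall>x\<in>set xs. \<exists>c\<in>Z. x = c \<otimes> g"
    using conjugate_eq_center_mult[OF gc] K_conj g by (auto simp flip: set_mset_mset simp: xs K_def)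
  moreover have "\<forall>y\<in>set ys. g \<otimes> y \<noteq> y \<otimes> g"
    using commuting_mem_zclass[OF g0 gK[unfolded K_def] g_nc] ys_mem by (auto simp: K_def)
  moreover have "set ys \<subseteq> carrier G" using ys_mem by blast
  ultimately obtain L where "L \<noteq> []" "mset L \<subseteq># S" "list_prod G L = \<one>"
    using exists_product_one_sublist[OF gc g_nc len_xs _ len_ys] S_eq by blast
  then show ?thesis by (auto simp: product_one_def)
qed

end

theorem theorem2p8:
  fixes G :: "('a, 'b) monoid_scheme" and p :: nat and S :: "'a multiset" and K :: "'a set"
  assumes "prime p" and "odd p"
    and "group G"
    and "finite (carrier G)" and "card (carrier G) = p ^ 3"
    and "\<forall>x \<in> carrier G. x [^]\<^bsub>G\<^esub> p = \<one>\<^bsub>G\<^esub>"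
    and "\<exists>x \<in> carrier G. \<exists>y \<in> carrier G. x \<otimes>\<^bsub>G\<^esub> y \<noteq> y \<otimes>\<^bsub>G\<^esub> x"
    and "set_mset S \<subseteq> carrier G"
    and "size S = 3 * p - 2"
    and "\<forall>x \<in># S. x \<notin> grp_center G"
    and "\<exists>g \<in> carrier G - grp_center G. K = zclass G p g"
    and "size (filter_mset (\<lambda>x. x \<in> K) S) = p"
    and "\<forall>x \<in># filter_mset (\<lambda>x. x \<in> K) S. \<forall>y \<in># filter_mset (\<lambda>x. x \<in> K) S. conjugate G x y"
  shows "\<exists>T. T \<subseteq># S \<and> product_one G T"
proof -
  interpret heisenberg_group G p
    using assms(1,3,5,6,7) by (simp add: heisenberg_group_def heisenberg_group_axioms_def)
  obtain g0 where "g0 \<in> carrier G" "K = zclass G p g0"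
    using assms(11) by blast
  then show ?thesis
    using exists_product_one_subseq assms(8-10,12,13) by blast
qed

end
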